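(* Let $s,t\in\mathbb{R}$ with $s\ne0$, $s^2+4t>0$, and let $a,b,u\in\mathbb{C}$. The function $$y(x)=\sum_{n=0}^\infty(a\oplus b)^n_{1,u}\frac{x^n}{\{n\}_{s,t}!}$$ satisfies $y(0)=1$ and $(\mathbf{D}_{s,t}y)(x)=a\,y(x)+b\,y(ux)$ at every $x$ for which the series converges at $x$, $ux$, $\varphi_{s,t}x$ and $\varphi'_{s,t}x$.
   Context: $\varphi_{s,t}=\frac{s+\sqrt{s^2+4t}}{2}$, $\varphi'_{s,t}=\frac{s-\sqrt{s^2+4t}}{2}$. Generalized Fibonacci polynomials: $\{0\}_{s,t}=0$, $\{1\}_{s,t}=1$, $\{n+2\}_{s,t}=s\{n+1\}_{s,t}+t\{n\}_{s,t}$; Fibotorial $\{n\}_{s,t}!=\prod_{k=1}^n\{k\}_{s,t}$, $\{0\}_{s,t}!=1$. $(a\oplus b)^0_{1,u}=1$ and $(a\oplus b)^n_{1,u}=\prod_{i=0}^{n-1}(a+bu^i)$ for $n\ge1$. The $(s,t)$-derivative: $(\mathbf{D}_{s,t}f)(x)=\frac{f(\varphi_{s,t}x)-f(\varphi'_{s,t}x)}{(\varphi_{s,t}-\varphi'_{s,t})x}$ for $x\ne0$, $(\mathbf{D}_{s,t}f)(0)=f'(0)$. *)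

theory Defs
  imports "HOL-Analysis.Analysis"
begin

definition phi :: "real \<Rightarrow> real \<Rightarrow> real" where
  "phi s t = (s + sqrt (s^2 + 4*t)) / 2"

definition phi' :: "real \<Rightarrow> real \<Rightarrow> real" where
  "phi' s t = (s - sqrt (s^2 + 4*t)) / 2"

fun fibst :: "real \<Rightarrow> real \<Rightarrow> nat \<Rightarrow> real" where
  "fibst s t 0 = 0"
| "fibst s t (Suc 0) = 1"
| "fibst s t (Suc (Suc n)) = s * fibst s t (Suc n) + t * fibst s t n"

definition fibotorial :: "real \<Rightarrow> real \<Rightarrow> nat \<Rightarrow> real" where
  "fibotorial s t n = (\<Prod>k=1..n. fibst s t k)"

definition qbinom_pow :: "complex \<Rightarrow> complex \<Rightarrow> complex \<Rightarrow> nat \<Rightarrow> complex" where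
  "qbinom_pow a b u n = (\<Prod>i<n. a + b * u^i)"

definition Dst :: "real \<Rightarrow> real \<Rightarrow> (complex \<Rightarrow> complex) \<Rightarrow> complex \<Rightarrow> complex" where
  "Dst s t f x = (if x = 0 then deriv f 0
     else (f (of_real (phi s t) * x) - f (of_real (phi' s t) * x))
          / (of_real (phi s t - phi' s t) * x))"

definition yterm :: "real \<Rightarrow> real \<Rightarrow> complex \<Rightarrow> complex \<Rightarrow> complex \<Rightarrow> complex \<Rightarrow> nat \<Rightarrow> complex" where
  "yterm s t a b u x n = qbinom_pow a b u n * x^n / of_real (fibotorial s t n)"

definition yfun :: "real \<Rightarrow> real \<Rightarrow> complex \<Rightarrow> complex \<Rightarrow> complex \<Rightarrow> complex \<Rightarrow> complex" where
  "yfun s t a b u x = (\<Sum>n. yterm s t a b u x n)"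

end

theory Submission
  imports Defs
begin

(* Binet's formula {n}(\<phi> - \<phi>') = \<phi>^n - \<phi>'^n turns the (s,t)-difference quotient of x^(n+1)
   into {n+1} x^n, which cancels the last factor of {n+1}! and leaves
   (a \<oplus> b)^(n+1) = (a \<oplus> b)^n (a + b u^n); summing termwise gives a y(x) + b y(ux) for x \<noteq> 0.
   At x = 0 the (s,t)-derivative is the ordinary derivative of the power series, i.e. its linear
   coefficient a + b.  The hypothesis s \<noteq> 0 rules out \<phi>' = -\<phi>, which would make some {n} vanish. *)

lemma phi_root:
  assumes "s^2 + 4*t \<ge> 0"
  shows "phi s t ^ 2 = s * phi s t + t" and "phi' s t ^ 2 = s * phi' s t + t"
  using assms by (simp_all add: phi_def phi'_def power2_eq_square field_simps)

lemma phi_add_phi': "phi s t + phi' s t = s"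
  by (simp add: phi_def phi'_def field_simps)

lemma phi_diff_phi': "phi s t - phi' s t = sqrt (s^2 + 4*t)"
  by (simp add: phi_def phi'_def field_simps)

lemma fibst_binet:
  assumes "s^2 + 4*t \<ge> 0"
  shows "fibst s t n * (phi s t - phi' s t) = phi s t ^ n - phi' s t ^ n"
  using assms
proof (induction s t n rule: fibst.induct)
  case (3 s t n)
  have "fibst s t (Suc (Suc n)) * (phi s t - phi' s t)
      = s * (phi s t ^ Suc n - phi' s t ^ Suc n) + t * (phi s t ^ n - phi' s t ^ n)"
    unfolding fibst.simps distrib_right mult.assoc using "3.IH"[OF "3.prems"] by simp
  also have "\<dots> = phi s t ^ n * (s * phi s t + t) - phi' s t ^ n * (s * phi' s t + t)"
    by (simp add: algebra_simps)
  also have "\<dots> = phi s t ^ Suc (Suc n) - phi' s t ^ Suc (Suc n)"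
    unfolding phi_root[OF "3.prems", symmetric] by (simp flip: power_add)
  finally show ?case .
qed simp_all

lemma fibst_nonzero:
  assumes "s \<noteq> 0" and "s^2 + 4*t > 0" and "n > 0"
  shows "fibst s t n \<noteq> 0"
proof
  assume "fibst s t n = 0"
  then have "\<bar>phi s t\<bar> ^ n = \<bar>phi' s t\<bar> ^ n"
    using fibst_binet[of s t n] assms(2) by (simp flip: power_abs)
  then have "\<bar>phi s t\<bar> = \<bar>phi' s t\<bar>"
    using assms(3) by (simp add: power_eq_imp_eq_base)
  moreover have "phi s t \<noteq> phi' s t"
    using phi_diff_phi'[of s t] assms(2) by auto
  ultimately have "phi s t + phi' s t = 0"
    by (auto simp: abs_eq_iff)
  then show False
    using phi_add_phi' assms(1) by simp
qed

lemma fibotorial_nonzero: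
  assumes "s \<noteq> 0" and "s^2 + 4*t > 0"
  shows "fibotorial s t n \<noteq> 0"
  using fibst_nonzero[OF assms] by (simp add: fibotorial_def)

lemma fibotorial_Suc: "fibotorial s t (Suc n) = fibotorial s t n * fibst s t (Suc n)"
  by (simp add: fibotorial_def prod.nat_ivl_Suc')

lemma qbinom_pow_Suc: "qbinom_pow a b u (Suc n) = qbinom_pow a b u n * (a + b * u^n)"
  by (simp add: qbinom_pow_def)

lemma yterm_Suc_phi_diff:
  assumes "s \<noteq> 0" and "s^2 + 4*t > 0"
  shows "yterm s t a b u (of_real (phi s t) * x) (Suc n) - yterm s t a b u (of_real (phi' s t) * x) (Suc n)
     = of_real (phi s t - phi' s t) * x * (a * yterm s t a b u x n + b * yterm s t a b u (u * x) n)"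
proof -
  define F where "F = fibotorial s t n"
  define f where "f = fibst s t (Suc n)"
  have "F \<noteq> 0" "f \<noteq> 0"
    using fibotorial_nonzero fibst_nonzero assms unfolding F_def f_def by auto
  have binet: "of_real (phi s t) ^ Suc n - of_real (phi' s t) ^ Suc n
      = complex_of_real f * of_real (phi s t - phi' s t)"
    using arg_cong[OF fibst_binet[of s t "Suc n"], of complex_of_real] assms(2)
    unfolding f_def by simp
  have "yterm s t a b u (of_real (phi s t) * x) (Suc n) - yterm s t a b u (of_real (phi' s t) * x) (Suc n)
      = qbinom_pow a b u (Suc n) * x ^ Suc n
        * (of_real (phi s t) ^ Suc n - of_real (phi' s t) ^ Suc n) / of_real (F * f)"
    unfolding yterm_def F_def f_def fibotorial_Suc
    by (simp add: diff_divide_distrib algebra_simps)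
  also have "\<dots> = of_real (phi s t - phi' s t) * x
      * (a * yterm s t a b u x n + b * yterm s t a b u (u * x) n)"
    unfolding binet yterm_def qbinom_pow_Suc F_def[symmetric]
    using \<open>F \<noteq> 0\<close> \<open>f \<noteq> 0\<close> by (simp add: field_simps)
  finally show ?thesis .
qed

lemma deriv_powser_at_0:
  fixes c :: "nat \<Rightarrow> 'a::{real_normed_field,banach}"
  assumes "summable (\<lambda>n. c n * K ^ n)" and "K \<noteq> 0"
  shows "deriv (\<lambda>z. \<Sum>n. c n * z ^ n) 0 = c 1"
proof -
  have "DERIV (\<lambda>z. \<Sum>n. c n * z ^ n) 0 :> (\<Sum>n. diffs c n * 0 ^ n)"
    using assms by (intro termdiffs_strong) auto
  then show ?thesis
    by (simp add: DERIV_imp_deriv diffs_def)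
qed

lemma yterm_powser:
  "yterm s t a b u z = (\<lambda>n. qbinom_pow a b u n / of_real (fibotorial s t n) * z ^ n)"
  by (simp add: yterm_def fun_eq_iff)

lemma yfun_powser:
  "yfun s t a b u = (\<lambda>z. \<Sum>n. qbinom_pow a b u n / of_real (fibotorial s t n) * z ^ n)"
  by (rule ext) (simp only: yfun_def yterm_powser)

lemma yfun_at_0: "yfun s t a b u 0 = 1"
  unfolding yfun_powser powser_zero by (simp add: qbinom_pow_def fibotorial_def)

lemma deriv_yfun_at_0:
  assumes "r > 0" and "\<And>z. norm z < r \<Longrightarrow> summable (yterm s t a b u z)"
  shows "deriv (yfun s t a b u) 0 = a + b"
proof -
  have "summable (yterm s t a b u (of_real (r / 2)))"
    using assms by simp
  then show ?thesis
    unfolding yfun_powser yterm_powser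
    by (subst deriv_powser_at_0[where K = "of_real (r / 2)"])
       (use assms(1) in \<open>simp_all add: qbinom_pow_def fibotorial_def\<close>)
qed

lemma yfun_phi_diff:
  assumes "s \<noteq> 0" and "s^2 + 4*t > 0"
    and "summable (yterm s t a b u x)" and "summable (yterm s t a b u (u * x))"
    and "summable (yterm s t a b u (of_real (phi s t) * x))"
    and "summable (yterm s t a b u (of_real (phi' s t) * x))"
  shows "yfun s t a b u (of_real (phi s t) * x) - yfun s t a b u (of_real (phi' s t) * x)
     = of_real (phi s t - phi' s t) * x * (a * yfun s t a b u x + b * yfun s t a b u (u * x))"
proof -
  let ?d = "\<lambda>n. yterm s t a b u (of_real (phi s t) * x) n - yterm s t a b u (of_real (phi' s t) * x) n"
  let ?rhs = "of_real (phi s t - phi' s t) * x * (a * yfun s t a b u x + b * yfun s t a b u (u * x))"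
  have d0: "?d 0 = 0"
    by (simp add: yterm_def qbinom_pow_def fibotorial_def)
  have tail: "(\<lambda>n. ?d (Suc n)) sums ?rhs"
    unfolding yterm_Suc_phi_diff[OF assms(1,2)] yfun_def
    using assms(3,4) by (intro sums_mult sums_add summable_sums)
  have "?d sums (yfun s t a b u (of_real (phi s t) * x) - yfun s t a b u (of_real (phi' s t) * x))"
    unfolding yfun_def using assms(5,6) by (intro sums_diff summable_sums)
  moreover have "?d sums ?rhs"
    using tail sums_Suc_iff[of ?d] d0 by simp
  ultimately show ?thesis
    by (rule sums_unique2)
qed

theorem mainTheorem13:
  fixes s t :: real and a b u :: complex
  assumes "s \<noteq> 0" and "s^2 + 4*t > 0"
  shows "yfun s t a b u 0 = 1 \<and>
    (\<forall>x::complex.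
       summable (yterm s t a b u x) \<and>
       summable (yterm s t a b u (u * x)) \<and>
       summable (yterm s t a b u (of_real (phi s t) * x)) \<and>
       summable (yterm s t a b u (of_real (phi' s t) * x)) \<and>
       (x = 0 \<longrightarrow> (\<exists>r>0. \<forall>z. norm z < r \<longrightarrow> summable (yterm s t a b u z)))
       \<longrightarrow> Dst s t (yfun s t a b u) x = a * yfun s t a b u x + b * yfun s t a b u (u * x))"
proof (intro conjI allI impI)
  show "yfun s t a b u 0 = 1"
    by (rule yfun_at_0)
  fix x :: complex
  assume H: "summable (yterm s t a b u x) \<and>
       summable (yterm s t a b u (u * x)) \<and>
       summable (yterm s t a b u (of_real (phi s t) * x)) \<and>
       summable (yterm s t a b u (of_real (phi' s t) * x)) \<and>
       (x = 0 \<longrightarrow> (\<exists>r>0. \<forall>z. norm z < r \<longrightarrow> summable (yterm s t a b u z)))"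
  show "Dst s t (yfun s t a b u) x = a * yfun s t a b u x + b * yfun s t a b u (u * x)"
  proof (cases "x = 0")
    case True
    with H obtain r where "r > 0" "\<And>z. norm z < r \<Longrightarrow> summable (yterm s t a b u z)"
      by blast
    then show ?thesis
      using True deriv_yfun_at_0 by (simp add: Dst_def yfun_at_0)
  next
    case False
    have "phi s t - phi' s t \<noteq> 0"
      using assms(2) by (simp add: phi_diff_phi')
    with False show ?thesis
      using yfun_phi_diff[OF assms] H by (simp add: Dst_def)
  qed
qed

end
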